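(* Let $P$ be a complex polynomial of degree $d\ge2$ with connected Julia set $J_P$, let $\varphi$ be the finest monotone map of $J_P$ (extended canonically to the plane) semiconjugating $P$ to the topological polynomial $g$, and let $J_{\sim_P}=\varphi(J_P)$. Then the map $\Phi=\varphi\circ\mathrm{imp}:S^1\to J_{\sim_P}$ semiconjugates $\sigma_d:z\mapsto z^d$ on $S^1$ to $g|_{J_{\sim_P}}$, i.e. $g\circ\Phi=\Phi\circ\sigma_d$.
   Context: The finest monotone map of $J_P$ is the monotone (continuous, connected fibers) surjection onto a locally connected continuum through which every other such surjection factors monotonically; it is extended to the plane by collapsing topological hulls of its fibers and being a homeomorphism elsewhere, and there is a branched covering map $g$ of the plane with $\varphi\circ P=g\circ\varphi$. Let $\Psi:\widehat{\mathbb{C}}\setminus\overline{\mathbb{D}}\to U_\infty(P)\cup\{\infty\}$ be the Böttcher map; $\mathrm{imp}(\alpha)$ for $e^{2\pi i\alpha}\in S^1$ is the set of all limits $\lim\Psi(z_i)$, $|z_i|>1$, $z_i\to e^{2\pi i\alpha}$. Since $\varphi$ collapses each impression to a point, $\Phi(\alpha)=\varphi(\mathrm{imp}(\alpha))$ is a well-defined continuous function. *)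

theory Defs
  imports "HOL-Complex_Analysis.Complex_Analysis" "HOL-Computational_Algebra.Polynomial"
begin

definition filled_julia :: "complex poly \<Rightarrow> complex set" where
  "filled_julia P = {z. bounded (range (\<lambda>n. (poly P ^^ n) z))}"

definition julia :: "complex poly \<Rightarrow> complex set" where
  "julia P = frontier (filled_julia P)"

definition basin_inf :: "complex poly \<Rightarrow> complex set" where
  "basin_inf P = - filled_julia P"

text \<open>It is unique up to rotation by a (d-1)-th root of unity; every such choice is allowed.\<close>
definition boettcher :: "complex poly \<Rightarrow> (complex \<Rightarrow> complex) \<Rightarrow> bool" where
  "boettcher P \<Psi> \<longleftrightarrow>
     \<Psi> holomorphic_on {z. 1 < cmod z} \<and>
     inj_on \<Psi> {z. 1 < cmod z} \<and>
     \<Psi> ` {z. 1 < cmod z} = basin_inf P \<and>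
     (\<forall>z. 1 < cmod z \<longrightarrow> \<Psi> (z ^ degree P) = poly P (\<Psi> z))"

definition impression :: "(complex \<Rightarrow> complex) \<Rightarrow> complex \<Rightarrow> complex set" where
  "impression \<Psi> \<zeta> = {w. \<exists>z::nat \<Rightarrow> complex. (\<forall>i. 1 < cmod (z i)) \<and> z \<longlonglongrightarrow> \<zeta> \<and>
                              (\<lambda>i. \<Psi> (z i)) \<longlonglongrightarrow> w}"

definition monotone_map :: "'a::topological_space set \<Rightarrow> ('a \<Rightarrow> 'b::topological_space) \<Rightarrow> 'b set \<Rightarrow> bool" where
  "monotone_map S f T \<longleftrightarrow> continuous_on S f \<and> f ` S = T \<and>
     (\<forall>y\<in>T. connected {x\<in>S. f x = y})"

definition lc_continuum :: "'a::topological_space set \<Rightarrow> bool" where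
  "lc_continuum T \<longleftrightarrow> T \<noteq> {} \<and> compact T \<and> connected T \<and> locally connected T"

text \<open>Every locally connected continuum is metrizable and
  hence embeds in the Hilbert cube, so competitors are taken with values in nat \<Rightarrow> real
  (product topology), which covers all of them up to homeomorphism.\<close>
definition finest_monotone :: "complex set \<Rightarrow> (complex \<Rightarrow> complex) \<Rightarrow> bool" where
  "finest_monotone J \<phi> \<longleftrightarrow>
     monotone_map J \<phi> (\<phi> ` J) \<and> lc_continuum (\<phi> ` J) \<and>
     (\<forall>(m :: complex \<Rightarrow> (nat \<Rightarrow> real)) Y. monotone_map J m Y \<and> lc_continuum Y \<longrightarrow>
        (\<exists>h. monotone_map (\<phi> ` J) h Y \<and> (\<forall>z\<in>J. m z = h (\<phi> z))))"

definition top_hull :: "complex set \<Rightarrow> complex set" where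
  "top_hull A = A \<union> \<Union>{C. C \<in> components (- A) \<and> bounded C}"

definition canonical_extension :: "complex set \<Rightarrow> (complex \<Rightarrow> complex) \<Rightarrow> bool" where
  "canonical_extension J \<phi> \<longleftrightarrow>
     continuous_on UNIV \<phi> \<and> surj \<phi> \<and>
     (\<forall>y\<in>\<phi> ` J. {z. \<phi> z = y} = top_hull {z\<in>J. \<phi> z = y}) \<and>
     (\<exists>\<psi>. homeomorphism (- (\<phi> -` (\<phi> ` J))) (- (\<phi> ` J)) \<phi> \<psi>)"

definition branched_covering :: "(complex \<Rightarrow> complex) \<Rightarrow> bool" where
  "branched_covering g \<longleftrightarrow>
     continuous_on UNIV g \<and> surj g \<and>
     (\<forall>U. open U \<longrightarrow> open (g ` U)) \<and>
     (\<forall>K. compact K \<longrightarrow> compact (g -` K)) \<and>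
     (\<forall>y. finite (g -` {y}))"

text \<open>Phi(zeta) = phi(imp(zeta)) (well defined once phi collapses impressions).\<close>
definition Phi_map :: "(complex \<Rightarrow> complex) \<Rightarrow> (complex \<Rightarrow> complex) \<Rightarrow> complex \<Rightarrow> complex" where
  "Phi_map \<phi> \<Psi> \<zeta> = (THE y. \<phi> ` impression \<Psi> \<zeta> = {y})"

end

theory Submission
  imports Defs
begin

text \<open>Impressions lie on the boundary of the basin of infinity, because the
  Boettcher map is an open injection of the exterior of the disk and so cannot send points
  escaping to the unit circle close to one of its own values.  Since the Boettcher map conjugates
  z^d to P, applying P to a limit point along z_i gives a limit point along z_i^d, i.e.
  P maps imp(zeta) into imp(zeta^d).  As phi collapses every impression to a point, the
  semiconjugacy phi o P = g o phi then reads g(Phi(zeta)) = Phi(zeta^d).\<close>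

lemma limit_not_in_image_of_injective_holomorphic:
  assumes hol: "f holomorphic_on U" and U: "open U" and inj: "inj_on f U"
    and zU: "\<And>i. z i \<in> U" and z: "z \<longlonglongrightarrow> \<zeta>" and \<zeta>: "\<zeta> \<notin> U"
    and fz: "(\<lambda>i. f (z i)) \<longlonglongrightarrow> w"
  shows "w \<notin> f ` U"
proof
  assume "w \<in> f ` U"
  then obtain u where u: "u \<in> U" "w = f u" by blast
  obtain r0 where r0: "r0 > 0" "ball u r0 \<subseteq> U" using U u(1) open_contains_ball by blast
  define r where "r = min r0 (dist u \<zeta> / 2)"
  have "u \<noteq> \<zeta>" using u(1) \<zeta> by blast
  then have r: "0 < r" "r < dist u \<zeta>" using r0(1) by (auto simp: r_def min_less_iff_disj)
  have B: "ball u r \<subseteq> U" using r0(2) by (auto simp: r_def)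
  have "open (f ` ball u r)"
    using open_mapping_thm3[OF holomorphic_on_subset[OF hol B] open_ball inj_on_subset[OF inj B]] .
  moreover have "w \<in> f ` ball u r" using u r(1) by simp
  ultimately have "eventually (\<lambda>i. f (z i) \<in> f ` ball u r) sequentially"
    using fz by (simp add: tendsto_def)
  then have "eventually (\<lambda>i. z i \<in> cball u r) sequentially"
    by (rule eventually_mono) (use inj B zU in \<open>auto dest: inj_onD\<close>)
  then have "\<zeta> \<in> cball u r"
    using Lim_in_closed_set[OF closed_cball _ trivial_limit_sequentially z] by blast
  then show False using r by (simp add: dist_commute)
qed

lemma impression_subset_julia:
  assumes B: "boettcher P \<Psi>" and \<zeta>: "cmod \<zeta> = 1"
  shows "impression \<Psi> \<zeta> \<subseteq> julia P"
proof
  fix w assume "w \<in> impression \<Psi> \<zeta>"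
  then obtain z where z1: "\<forall>i. 1 < cmod (z i)" and z: "z \<longlonglongrightarrow> \<zeta>" and wl: "(\<lambda>i. \<Psi> (z i)) \<longlonglongrightarrow> w"
    unfolding impression_def by blast
  have hol: "\<Psi> holomorphic_on {z. 1 < cmod z}" and inj: "inj_on \<Psi> {z. 1 < cmod z}"
    and img: "\<Psi> ` {z. 1 < cmod z} = basin_inf P"
    using B unfolding boettcher_def by auto
  have "open {z::complex. 1 < cmod z}" by (intro open_Collect_less continuous_intros)
  then have "w \<notin> basin_inf P"
    using limit_not_in_image_of_injective_holomorphic[OF hol _ inj _ z _ wl] z1 \<zeta> img by simp
  moreover have "w \<in> closure (basin_inf P)"
    using z1 img wl by (auto intro!: closure_sequential[THEN iffD2] exI[of _ "\<lambda>i. \<Psi> (z i)"])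
  ultimately have "w \<in> frontier (basin_inf P)"
    using interior_subset unfolding frontier_def by blast
  then show "w \<in> julia P"
    by (simp add: julia_def basin_inf_def frontier_complement)
qed

lemma poly_image_impression:
  assumes B: "boettcher P \<Psi>" and d: "degree P \<ge> 1"
  shows "poly P ` impression \<Psi> \<zeta> \<subseteq> impression \<Psi> (\<zeta> ^ degree P)"
proof clarify
  fix w assume "w \<in> impression \<Psi> \<zeta>"
  then obtain z where z1: "\<forall>i. 1 < cmod (z i)" and z: "z \<longlonglongrightarrow> \<zeta>" and wl: "(\<lambda>i. \<Psi> (z i)) \<longlonglongrightarrow> w"
    unfolding impression_def by blast
  have conj: "\<Psi> (z i ^ degree P) = poly P (\<Psi> (z i))" for i
    using B z1 unfolding boettcher_def by auto
  have "\<forall>i. 1 < cmod (z i ^ degree P)"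
    using z1 d by (simp add: norm_power one_less_power)
  moreover have "(\<lambda>i. z i ^ degree P) \<longlonglongrightarrow> \<zeta> ^ degree P"
    using z by (intro tendsto_intros)
  moreover have "(\<lambda>i. \<Psi> (z i ^ degree P)) \<longlonglongrightarrow> poly P w"
    unfolding conj using wl by (rule tendsto_poly)
  ultimately show "poly P w \<in> impression \<Psi> (\<zeta> ^ degree P)"
    unfolding impression_def by (intro CollectI exI[of _ "\<lambda>i. z i ^ degree P"]) simp
qed

lemma Phi_map_eqI:
  assumes "\<phi> ` impression \<Psi> \<zeta> = {y}"
  shows "Phi_map \<phi> \<Psi> \<zeta> = y"
  unfolding Phi_map_def using assms by (rule the_equality) (metis assms singleton_inject)

theorem theorem4p3:
  fixes P :: "complex poly" and \<phi> g \<Psi> :: "complex \<Rightarrow> complex"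
  assumes "degree P \<ge> 2"
    and "connected (julia P)"
    and "finest_monotone (julia P) \<phi>"
    and "canonical_extension (julia P) \<phi>"
    and "branched_covering g"
    and "\<forall>z. \<phi> (poly P z) = g (\<phi> z)"
    and "boettcher P \<Psi>"
    and "\<forall>\<zeta>\<in>sphere 0 1. \<exists>y. \<phi> ` impression \<Psi> \<zeta> = {y}"
  shows "(\<forall>\<zeta>\<in>sphere 0 1. Phi_map \<phi> \<Psi> \<zeta> \<in> \<phi> ` julia P) \<and>
         (\<forall>\<zeta>\<in>sphere 0 1. g (Phi_map \<phi> \<Psi> \<zeta>) = Phi_map \<phi> \<Psi> (\<zeta> ^ degree P))"
proof -
  have Phi_eq: "Phi_map \<phi> \<Psi> \<zeta> = \<phi> w" if "\<zeta> \<in> sphere 0 1" "w \<in> impression \<Psi> \<zeta>" for \<zeta> w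
    using assms(8) that by (metis Phi_map_eqI image_eqI singletonD)
  have nonempty: "\<exists>w. w \<in> impression \<Psi> \<zeta>" if "\<zeta> \<in> sphere 0 1" for \<zeta>
    using assms(8) that by fastforce
  show ?thesis
  proof (intro conjI ballI)
    fix \<zeta> :: complex assume \<zeta>: "\<zeta> \<in> sphere 0 1"
    then obtain w where w: "w \<in> impression \<Psi> \<zeta>" using nonempty by blast
    then have "w \<in> julia P" using impression_subset_julia[OF assms(7)] \<zeta> by auto
    then show "Phi_map \<phi> \<Psi> \<zeta> \<in> \<phi> ` julia P" using Phi_eq[OF \<zeta> w] by simp
    have "poly P w \<in> impression \<Psi> (\<zeta> ^ degree P)"
      using poly_image_impression[OF assms(7)] assms(1) w by fastforce
    moreover have "\<zeta> ^ degree P \<in> sphere 0 1" using \<zeta> by (simp add: norm_power)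
    ultimately show "g (Phi_map \<phi> \<Psi> \<zeta>) = Phi_map \<phi> \<Psi> (\<zeta> ^ degree P)"
      using Phi_eq[OF \<zeta> w] Phi_eq assms(6) by simp
  qed
qed

end
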